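(* Let $T$ be a tree on $n$ vertices. Then $k(T)\ge \left\lceil \frac{\mathrm{diam}(T)+1}{2}\right\rceil$, and this bound is tight (equality holds, for example, for stars and for paths).
   Context: For a connected graph $G=(V,E)$ and $v\in V$, the status of $v$ is $s(v)=\sum_{u\in V} d(v,u)$, where $d$ is the shortest-path distance. $k(G)$ denotes the number of distinct values among the statuses of the vertices of $G$. $\mathrm{diam}(T)$ is the diameter of $T$. *)

theory Defs
  imports Complex_Main
begin

definition simple_graph :: "'a set \<Rightarrow> 'a set set \<Rightarrow> bool" where
  "simple_graph V E \<longleftrightarrow> finite V \<and> (\<forall>e\<in>E. \<exists>u v. u \<in> V \<and> v \<in> V \<and> u \<noteq> v \<and> e = {u, v})"

definition adj :: "'a set set \<Rightarrow> 'a \<Rightarrow> 'a \<Rightarrow> bool" where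
  "adj E u v \<longleftrightarrow> {u, v} \<in> E"

text \<open>A walk from u to v of length n (number of edges): a vertex list of length n+1.\<close>
definition is_walk :: "'a set \<Rightarrow> 'a set set \<Rightarrow> 'a list \<Rightarrow> bool" where
  "is_walk V E ps \<longleftrightarrow> ps \<noteq> [] \<and> set ps \<subseteq> V \<and>
     (\<forall>i. Suc i < length ps \<longrightarrow> adj E (ps ! i) (ps ! Suc i))"

definition connected_graph :: "'a set \<Rightarrow> 'a set set \<Rightarrow> bool" where
  "connected_graph V E \<longleftrightarrow> V \<noteq> {} \<and>
     (\<forall>u\<in>V. \<forall>v\<in>V. \<exists>ps. is_walk V E ps \<and> hd ps = u \<and> last ps = v)"

definition is_cycle :: "'a set \<Rightarrow> 'a set set \<Rightarrow> 'a list \<Rightarrow> bool" where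
  "is_cycle V E cs \<longleftrightarrow> length cs \<ge> 3 \<and> distinct cs \<and> is_walk V E cs \<and> adj E (last cs) (hd cs)"

definition is_tree :: "'a set \<Rightarrow> 'a set set \<Rightarrow> bool" where
  "is_tree V E \<longleftrightarrow> simple_graph V E \<and> connected_graph V E \<and> (\<nexists>cs. is_cycle V E cs)"

definition dist :: "'a set \<Rightarrow> 'a set set \<Rightarrow> 'a \<Rightarrow> 'a \<Rightarrow> nat" where
  "dist V E u v = (LEAST n. \<exists>ps. is_walk V E ps \<and> hd ps = u \<and> last ps = v \<and> length ps = Suc n)"

definition status :: "'a set \<Rightarrow> 'a set set \<Rightarrow> 'a \<Rightarrow> nat" where
  "status V E v = (\<Sum>u\<in>V. dist V E v u)"

definition k_num :: "'a set \<Rightarrow> 'a set set \<Rightarrow> nat" where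
  "k_num V E = card (status V E ` V)"

definition diam :: "'a set \<Rightarrow> 'a set set \<Rightarrow> nat" where
  "diam V E = Max {dist V E u v | u v. u \<in> V \<and> v \<in> V}"

definition path_edges :: "nat \<Rightarrow> nat set set" where
  "path_edges n = {{i, Suc i} | i. Suc i < n}"

definition star_edges :: "nat \<Rightarrow> nat set set" where
  "star_edges n = {{0, i} | i. 0 < i \<and> i < n}"

end

theory Submission
  imports Defs
begin

(* Let u = x_0, x_1, ..., x_d = v be a shortest path between two vertices at distance
   d = diam(T). Moving from a vertex a to a neighbour b changes the status by
   2 |closer_to a b| - n, where closer_to a b is the set of vertices nearer to a than to b.
   In a tree, every vertex nearer to x_i than to x_(i+1) is also nearer to x_(i+1) than to
   x_(i+2), and x_(i+1) is a new such vertex; so the increments of i |-> s(x_i) strictly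
   increase. A strictly convex sequence takes every value at most twice, hence the d + 1
   statuses s(x_0), ..., s(x_d) comprise at least (d + 1) / 2 distinct values. *)

lemma card_image_strictly_convex:
  fixes f :: "nat \<Rightarrow> 'b::linordered_ab_group_add"
  assumes convex: "\<And>i. Suc i < d \<Longrightarrow> f (Suc i) - f i < f (Suc (Suc i)) - f (Suc i)"
  shows "d + 1 \<le> 2 * card (f ` {0..d})"
proof -
  define p where "p = (LEAST i. i = d \<or> f i \<le> f (Suc i))"
  have p: "p = d \<or> f p \<le> f (Suc p)" unfolding p_def by (rule LeastI[of _ d]) simp
  have "p \<le> d" unfolding p_def by (rule Least_le) simp
  have decreasing: "f (Suc i) < f i" if "i < p" for i
    using not_less_Least[OF that[unfolded p_def]] \<open>p \<le> d\<close> that by auto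
  have increments: "f (Suc i) - f i < f (Suc j) - f j" if "i < j" "j < d" for i j
  proof (rule lift_Suc_mono_less_ivl[where N = "{..<j}"])
    show "f (Suc n) - f n < f (Suc (Suc n)) - f (Suc n)" if "n \<in> {..<j}" for n
      using that \<open>j < d\<close> by (intro convex) simp
  qed (use that in auto)
  have increasing: "f i < f (Suc i)" if "p < i" "i < d" for i
  proof -
    have "0 \<le> f (Suc p) - f p" using p that by auto
    also have "\<dots> < f (Suc i) - f i" using increments that .
    finally show ?thesis by simp
  qed
  have "inj_on f {0..p}"
  proof (rule linorder_inj_onI')
    fix i j assume "i \<in> {0..p}" "j \<in> {0..p}" "i < j"
    have "- f i < - f j"
    proof (rule lift_Suc_mono_less_ivl[where N = "{..<p}"])
      show "- f n < - f (Suc n)" if "n \<in> {..<p}" for n using decreasing that by simp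
    qed (use \<open>i < j\<close> \<open>j \<in> {0..p}\<close> in auto)
    then show "f i \<noteq> f j" by auto
  qed
  moreover have "inj_on f {Suc p..d}"
  proof (rule linorder_inj_onI')
    fix i j assume "i \<in> {Suc p..d}" "j \<in> {Suc p..d}" "i < j"
    have "f i < f j"
    proof (rule lift_Suc_mono_less_ivl[where N = "{Suc p..<d}"])
      show "f n < f (Suc n)" if "n \<in> {Suc p..<d}" for n using increasing that by simp
    qed (use \<open>i < j\<close> \<open>i \<in> {Suc p..d}\<close> \<open>j \<in> {Suc p..d}\<close> in auto)
    then show "f i \<noteq> f j" by simp
  qed
  ultimately have "card (f ` {0..p}) = Suc p" "card (f ` {Suc p..d}) = d - p"
    by (simp_all add: card_image)
  moreover have "card (f ` {0..p}) \<le> card (f ` {0..d})" "card (f ` {Suc p..d}) \<le> card (f ` {0..d})"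
    using \<open>p \<le> d\<close> by (intro card_mono image_mono; auto)+
  ultimately show ?thesis using \<open>p \<le> d\<close> by linarith
qed

lemma adj_commute: "adj E u v \<longleftrightarrow> adj E v u"
  by (simp add: adj_def insert_commute)

lemma is_walk_singleton [simp]: "is_walk V E [x] \<longleftrightarrow> x \<in> V"
  by (simp add: is_walk_def)

lemma is_walk_Cons:
  assumes "ps \<noteq> []"
  shows "is_walk V E (x # ps) \<longleftrightarrow> x \<in> V \<and> adj E x (hd ps) \<and> is_walk V E ps"
proof -
  obtain y ys where "ps = y # ys" using assms by (cases ps) auto
  then show ?thesis by (auto simp: is_walk_def All_less_Suc2)
qed

lemma is_walk_append:
  assumes "xs \<noteq> []" "ys \<noteq> []"
  shows "is_walk V E (xs @ ys) \<longleftrightarrow> is_walk V E xs \<and> is_walk V E ys \<and> adj E (last xs) (hd ys)"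
  using assms
proof (induction xs)
  case (Cons x xs)
  then show ?case by (cases "xs = []") (auto simp: is_walk_Cons)
qed simp

lemma is_walk_rev: "is_walk V E ps \<Longrightarrow> is_walk V E (rev ps)"
proof (induction ps)
  case (Cons x ps)
  then show ?case
    by (cases "ps = []") (auto simp: is_walk_Cons is_walk_append last_rev adj_commute)
qed simp

definition has_walk :: "'a set \<Rightarrow> 'a set set \<Rightarrow> nat \<Rightarrow> 'a \<Rightarrow> 'a \<Rightarrow> bool" where
  "has_walk V E n u v \<longleftrightarrow> (\<exists>ps. is_walk V E ps \<and> hd ps = u \<and> last ps = v \<and> length ps = Suc n)"

lemma dist_eq_Least_has_walk: "dist V E u v = (LEAST n. has_walk V E n u v)"
  by (simp add: dist_def has_walk_def)

lemma dist_le: "has_walk V E n u v \<Longrightarrow> dist V E u v \<le> n"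
  unfolding dist_eq_Least_has_walk by (rule Least_le)

lemma has_walk_dist: "has_walk V E n u v \<Longrightarrow> has_walk V E (dist V E u v) u v"
  unfolding dist_eq_Least_has_walk by (rule LeastI)

lemma dist_eqI: "has_walk V E n u v \<Longrightarrow> (\<And>m. has_walk V E m u v \<Longrightarrow> n \<le> m) \<Longrightarrow> dist V E u v = n"
  unfolding dist_eq_Least_has_walk by (rule Least_equality)

lemma has_walk_0_iff: "has_walk V E 0 u v \<longleftrightarrow> u \<in> V \<and> u = v"
  unfolding has_walk_def by (auto simp: length_Suc_conv intro: exI[of _ "[u]"])

lemma has_walk_adj: "adj E u v \<Longrightarrow> u \<in> V \<Longrightarrow> v \<in> V \<Longrightarrow> has_walk V E 1 u v"
  unfolding has_walk_def by (intro exI[of _ "[u, v]"]) (simp add: is_walk_Cons)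

lemma adj_if_has_walk_1: "has_walk V E 1 u v \<Longrightarrow> adj E u v"
  unfolding has_walk_def is_walk_def by (auto simp: length_Suc_conv)

lemma has_walk_sym: "has_walk V E n u v \<Longrightarrow> has_walk V E n v u"
  unfolding has_walk_def by (metis is_walk_rev hd_rev last_rev length_rev)

lemma has_walk_trans:
  assumes "has_walk V E n u v" "has_walk V E m v w"
  shows "has_walk V E (n + m) u w"
proof -
  obtain ps qs where ps: "is_walk V E ps" "hd ps = u" "last ps = v" "length ps = Suc n"
    and qs: "is_walk V E qs" "hd qs = v" "last qs = w" "length qs = Suc m"
    using assms unfolding has_walk_def by blast
  show ?thesis
  proof (cases m)
    case 0
    then show ?thesis using assms by (simp add: has_walk_0_iff)
  next
    case (Suc m')
    then obtain rs where rs: "qs = v # rs" "rs \<noteq> []" using qs by (cases qs) force+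
    have "ps \<noteq> []" using ps(1) by (simp add: is_walk_def)
    then have "is_walk V E (ps @ rs)"
      using ps qs rs by (simp add: is_walk_append is_walk_Cons)
    then show ?thesis unfolding has_walk_def using ps qs rs \<open>ps \<noteq> []\<close>
      by (intro exI[of _ "ps @ rs"]) auto
  qed
qed

lemma has_walk_to_nth:
  assumes "is_walk V E ps" "i < length ps"
  shows "has_walk V E i (hd ps) (ps ! i)"
  unfolding has_walk_def using assms
  by (intro exI[of _ "take (Suc i) ps"]) (auto simp: is_walk_def last_conv_nth dest: in_set_takeD)

lemma has_walk_from_nth:
  assumes "is_walk V E ps" "i < length ps"
  shows "has_walk V E (length ps - Suc i) (ps ! i) (last ps)"
  unfolding has_walk_def using assms
  by (intro exI[of _ "drop i ps"]) (auto simp: is_walk_def hd_drop_conv_nth dest: in_set_dropD)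

lemma dist_self: "u \<in> V \<Longrightarrow> dist V E u u = 0"
  using dist_le[of V E 0 u u] by (simp add: has_walk_0_iff)

lemma dist_adj_eq_1:
  assumes "adj E u v" "u \<in> V" "v \<in> V" "u \<noteq> v"
  shows "dist V E u v = 1"
proof (rule dist_eqI)
  show "has_walk V E 1 u v" using assms(1-3) by (rule has_walk_adj)
  show "1 \<le> m" if "has_walk V E m u v" for m
    using that assms(4) by (cases m) (auto simp: has_walk_0_iff)
qed

lemma dist_common_neighbour_eq_2:
  assumes "adj E u w" "adj E w v" "u \<in> V" "w \<in> V" "v \<in> V" "u \<noteq> v" "\<not> adj E u v"
  shows "dist V E u v = 2"
proof (rule dist_eqI)
  show "has_walk V E 2 u v"
    using has_walk_trans[OF has_walk_adj[OF assms(1,3,4)] has_walk_adj[OF assms(2,4,5)]]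
    by (simp add: numeral_2_eq_2)
  show "2 \<le> m" if "has_walk V E m u v" for m
  proof (rule ccontr)
    assume "\<not> 2 \<le> m"
    then have "m = 0 \<or> m = 1" by auto
    then show False using that assms(6,7) by (metis adj_if_has_walk_1 has_walk_0_iff)
  qed
qed

lemma finite_dists: "finite V \<Longrightarrow> finite {dist V E u v | u v. u \<in> V \<and> v \<in> V}"
proof -
  have "{dist V E u v | u v. u \<in> V \<and> v \<in> V} = (\<lambda>(u, v). dist V E u v) ` (V \<times> V)" by auto
  then show "finite V \<Longrightarrow> ?thesis" by simp
qed

lemma diam_eqI:
  assumes "finite V" "\<And>u v. u \<in> V \<Longrightarrow> v \<in> V \<Longrightarrow> dist V E u v \<le> D"
    and "u \<in> V" "v \<in> V" "dist V E u v = D"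
  shows "diam V E = D"
  unfolding diam_def using assms by (intro Max_eqI finite_dists) auto

locale connected_simple_graph =
  fixes V :: "'a set" and E :: "'a set set"
  assumes simple: "simple_graph V E" and connected: "connected_graph V E"
begin

lemma finite_V: "finite V"
  using simple by (simp add: simple_graph_def)

lemma V_nonempty: "V \<noteq> {}"
  using connected by (simp add: connected_graph_def)

lemma adj_vertices:
  assumes "adj E a b"
  shows "a \<in> V" "b \<in> V" "a \<noteq> b"
proof -
  obtain u v where "u \<in> V" "v \<in> V" "u \<noteq> v" "{a, b} = {u, v}"
    using assms simple unfolding simple_graph_def adj_def by blast
  then show "a \<in> V" "b \<in> V" "a \<noteq> b" by (auto simp: doubleton_eq_iff)
qed

lemma has_walk_dist_between:
  assumes "u \<in> V" "v \<in> V"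
  shows "has_walk V E (dist V E u v) u v"
proof -
  obtain ps where "is_walk V E ps" "hd ps = u" "last ps = v"
    using assms connected unfolding connected_graph_def by blast
  then have "has_walk V E (length ps - 1) u v"
    unfolding has_walk_def by (intro exI[of _ ps]) (auto simp: is_walk_def)
  then show ?thesis by (rule has_walk_dist)
qed

lemma dist_triangle:
  assumes "u \<in> V" "v \<in> V" "w \<in> V"
  shows "dist V E u w \<le> dist V E u v + dist V E v w"
  using dist_le[OF has_walk_trans[OF has_walk_dist_between[OF assms(1,2)] has_walk_dist_between[OF assms(2,3)]]] .

lemma dist_eq_0_iff:
  assumes "u \<in> V" "v \<in> V"
  shows "dist V E u v = 0 \<longleftrightarrow> u = v"
proof
  show "dist V E u v = 0 \<Longrightarrow> u = v"
    using has_walk_dist_between[OF assms] by (simp add: has_walk_0_iff)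
  show "u = v \<Longrightarrow> dist V E u v = 0"
    using assms by (simp add: dist_self)
qed

lemma dist_adj_le:
  assumes "adj E a b" "y \<in> V"
  shows "dist V E a y \<le> dist V E b y + 1"
proof -
  have "dist V E a b \<le> 1"
    using dist_le[OF has_walk_adj[OF assms(1) adj_vertices(1,2)[OF assms(1)]]] .
  then show ?thesis
    using dist_triangle[OF adj_vertices(1,2)[OF assms(1)] assms(2)] by linarith
qed

lemma exists_adj_closer:
  assumes "v \<in> V" "y \<in> V" "v \<noteq> y"
  shows "\<exists>x. adj E v x \<and> dist V E x y + 1 = dist V E v y"
proof -
  obtain ps where ps: "is_walk V E ps" "hd ps = v" "last ps = y" "length ps = Suc (dist V E v y)"
    using has_walk_dist_between[OF assms(1,2)] unfolding has_walk_def by blast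
  have "dist V E v y \<noteq> 0" using dist_eq_0_iff assms by blast
  then have len: "1 < length ps" using ps(4) by simp
  have adj: "adj E v (ps ! 1)"
    using ps(1,2) len by (auto simp: is_walk_def hd_conv_nth)
  have "dist V E (ps ! 1) y \<le> dist V E v y - 1"
    using has_walk_from_nth[OF ps(1) len] ps(3,4) by (simp add: dist_le)
  moreover have "dist V E v y \<le> dist V E (ps ! 1) y + 1" using dist_adj_le[OF adj assms(2)] .
  ultimately show ?thesis using adj \<open>dist V E v y \<noteq> 0\<close> by (intro exI[of _ "ps ! 1"]) auto
qed

lemma diam_attained: "\<exists>u\<in>V. \<exists>v\<in>V. dist V E u v = diam V E"
proof -
  let ?S = "{dist V E u v | u v. u \<in> V \<and> v \<in> V}"
  have "finite ?S" using finite_V by (rule finite_dists)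
  moreover have "?S \<noteq> {}" using V_nonempty by auto
  ultimately have "Max ?S \<in> ?S" by (rule Max_in)
  then obtain u v where "u \<in> V" "v \<in> V" "Max ?S = dist V E u v" by blast
  then show ?thesis unfolding diam_def by metis
qed

end

definition closer_to :: "'a set \<Rightarrow> 'a set set \<Rightarrow> 'a \<Rightarrow> 'a \<Rightarrow> 'a set" where
  "closer_to V E a b = {y \<in> V. dist V E a y < dist V E b y}"

locale tree = connected_simple_graph +
  assumes acyclic: "\<nexists>cs. is_cycle V E cs"
begin

(* Step both ends one edge towards y: either the two new vertices coincide and close a cycle,
   or they extend the path to a longer one of the same kind, one level closer to y. *)
lemma equidistant_ends_inner_vertex_not_farther:
  assumes "y \<in> V" "is_walk V E (u # mid @ [w])" "distinct (u # mid @ [w])"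
    and "dist V E u y = dist V E w y"
  shows "\<exists>z\<in>set mid. dist V E z y \<le> dist V E u y"
proof (rule ccontr)
  assume "\<not> ?thesis"
  then have "\<forall>z\<in>set mid. dist V E u y < dist V E z y" by auto
  with assms(2-4) show False
  proof (induction "dist V E u y" arbitrary: u w mid)
    case 0
    then have "u = y" "w = y" using assms(1) dist_eq_0_iff by (auto simp: is_walk_def)
    then show ?case using "0.prems"(2) by simp
  next
    case (Suc k)
    have "u \<in> V" "w \<in> V" using Suc.prems(1) by (auto simp: is_walk_def)
    moreover have "u \<noteq> y" "w \<noteq> y" using Suc.hyps Suc.prems(3) assms(1) dist_eq_0_iff by force+
    ultimately obtain p q where p: "adj E u p" "dist V E p y = k" and q: "adj E w q" "dist V E q y = k"
      using exists_adj_closer assms(1) Suc.hyps Suc.prems(3) by (metis add_right_cancel Suc_eq_plus1)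
    have "p \<in> V" "q \<in> V" using p q adj_vertices by auto
    have "p \<notin> set (u # mid @ [w])" "q \<notin> set (u # mid @ [w])"
      using p q Suc.hyps Suc.prems(3,4) by auto
    then have walk: "is_walk V E (p # u # mid @ [w])" and dist: "distinct (p # u # mid @ [w])"
      using Suc.prems(1,2) \<open>p \<in> V\<close> p(1) by (simp_all add: is_walk_Cons adj_commute)
    show False
    proof (cases "p = q")
      case True
      then have "is_cycle V E (p # u # mid @ [w])"
        using walk dist q(1) unfolding is_cycle_def by simp
      then show False using acyclic by blast
    next
      case False
      have "is_walk V E (p # (u # mid @ [w]) @ [q])"
        using walk \<open>q \<in> V\<close> q(1) is_walk_append[of "p # u # mid @ [w]" "[q]"] by simp
      moreover have "distinct (p # (u # mid @ [w]) @ [q])"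
        using dist False \<open>q \<notin> set (u # mid @ [w])\<close> by auto
      moreover have "\<forall>z\<in>set (u # mid @ [w]). dist V E p y < dist V E z y"
        using Suc.hyps Suc.prems(3,4) p(2) by auto
      ultimately show False using Suc.hyps(1)[of p "u # mid @ [w]" q] p(2) q(2) by simp
    qed
  qed
qed

lemma dist_adj_neq:
  assumes "adj E a b" "y \<in> V"
  shows "dist V E a y \<noteq> dist V E b y"
  using equidistant_ends_inner_vertex_not_farther[of y a "[]" b] assms adj_vertices[OF assms(1)]
  by (auto simp: is_walk_Cons)

lemma dist_adj_cases:
  assumes "adj E a b" "y \<in> V"
  shows "dist V E b y = dist V E a y + 1 \<or> dist V E a y = dist V E b y + 1"
  using dist_adj_le[OF assms] dist_adj_le[of b a y] dist_adj_neq[OF assms] assms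
  by (force simp: adj_commute)

lemma closer_neighbour_unique:
  assumes "adj E b a" "adj E b c" "y \<in> V"
    and "dist V E a y < dist V E b y" "dist V E c y < dist V E b y"
  shows "a = c"
proof (rule ccontr)
  assume "a \<noteq> c"
  then have "is_walk V E (a # [b] @ [c])" "distinct (a # [b] @ [c])"
    using assms(1,2) adj_vertices[OF assms(1)] adj_vertices[OF assms(2)]
    by (auto simp: is_walk_Cons adj_commute)
  moreover have "dist V E a y = dist V E c y"
    using dist_adj_cases[OF assms(1,3)] dist_adj_cases[OF assms(2,3)] assms(4,5) by linarith
  ultimately show False
    using equidistant_ends_inner_vertex_not_farther[OF assms(3)] assms(4) by fastforce
qed

lemma status_adj_diff:
  assumes "adj E a b"
  shows "int (status V E b) - int (status V E a) = 2 * int (card (closer_to V E a b)) - int (card V)"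
proof -
  let ?C = "closer_to V E a b"
  have C: "?C \<subseteq> V" "finite ?C" using finite_V finite_subset by (auto simp: closer_to_def)
  have "int (status V E b) - int (status V E a) = (\<Sum>y\<in>V. int (dist V E b y) - int (dist V E a y))"
    by (simp add: status_def sum_subtractf)
  also have "\<dots> = (\<Sum>y\<in>V. if y \<in> ?C then 1 else -1)"
    using dist_adj_cases[OF assms] by (intro sum.cong) (fastforce simp: closer_to_def)+
  also have "\<dots> = int (card ?C) - int (card (V - ?C))"
    using finite_V C by (simp add: sum.If_cases Int_absorb1 Diff_eq)
  also have "\<dots> = 2 * int (card ?C) - int (card V)"
    using finite_V C by (simp add: card_Diff_subset of_nat_diff card_mono)
  finally show ?thesis .
qed

lemma closer_to_psubset:
  assumes "adj E a b" "adj E b c" "a \<noteq> c"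
  shows "closer_to V E a b \<subset> closer_to V E b c"
proof
  show "closer_to V E a b \<subseteq> closer_to V E b c"
  proof
    fix y assume y: "y \<in> closer_to V E a b"
    then have "y \<in> V" "dist V E a y < dist V E b y" by (auto simp: closer_to_def)
    then show "y \<in> closer_to V E b c"
      using closer_neighbour_unique[of b a c y] dist_adj_cases[OF assms(2)] assms
      by (fastforce simp: closer_to_def adj_commute)
  qed
  have "b \<in> V" "c \<in> V" "b \<noteq> c" using adj_vertices[OF assms(2)] by auto
  then have "b \<in> closer_to V E b c" "b \<notin> closer_to V E a b"
    using dist_eq_0_iff[of b b] dist_eq_0_iff[of c b] by (auto simp: closer_to_def)
  then show "closer_to V E a b \<noteq> closer_to V E b c" by blast
qed

lemma diam_le_twice_k_num: "diam V E + 1 \<le> 2 * k_num V E"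
proof -
  let ?d = "diam V E"
  obtain u v where "u \<in> V" "v \<in> V" and d: "dist V E u v = ?d"
    using diam_attained by blast
  then obtain ps where ps: "is_walk V E ps" "hd ps = u" "last ps = v" "length ps = Suc ?d"
    using has_walk_dist_between unfolding has_walk_def by metis
  have on_path: "ps ! i \<in> V" if "i \<le> ?d" for i
    using ps that nth_mem by (fastforce simp: is_walk_def)
  have adj: "adj E (ps ! i) (ps ! Suc i)" if "i < ?d" for i
    using ps that by (simp add: is_walk_def)
  have no_backtrack: "ps ! i \<noteq> ps ! Suc (Suc i)" if "Suc i < ?d" for i
  proof
    assume backtrack: "ps ! i = ps ! Suc (Suc i)"
    have "has_walk V E i u (ps ! i)"
      using has_walk_to_nth[OF ps(1), of i] ps that by simp
    moreover have "has_walk V E (?d - Suc (Suc i)) (ps ! i) v"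
      using has_walk_from_nth[OF ps(1), of "Suc (Suc i)"] backtrack ps that by simp
    ultimately have "has_walk V E (i + (?d - Suc (Suc i))) u v" by (rule has_walk_trans)
    then show False using dist_le d that by fastforce
  qed
  define f where "f i = int (status V E (ps ! i))" for i
  have "f (Suc i) - f i < f (Suc (Suc i)) - f (Suc i)" if "Suc i < ?d" for i
  proof -
    have "card (closer_to V E (ps ! i) (ps ! Suc i)) < card (closer_to V E (ps ! Suc i) (ps ! Suc (Suc i)))"
      using closer_to_psubset[OF adj adj no_backtrack] finite_V that
      by (intro psubset_card_mono) (auto simp: closer_to_def)
    then show ?thesis
      using status_adj_diff[OF adj[of i]] status_adj_diff[OF adj[of "Suc i"]] that unfolding f_def by simp
  qed
  then have "?d + 1 \<le> 2 * card (f ` {0..?d})" by (rule card_image_strictly_convex)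
  moreover have "card (f ` {0..?d}) \<le> card (int ` status V E ` V)"
    using on_path finite_V by (intro card_mono) (auto simp: f_def)
  moreover have "card (int ` status V E ` V) = k_num V E"
    by (simp add: k_num_def card_image)
  ultimately show ?thesis by linarith
qed

end

lemma tree_if_is_tree: "is_tree V E \<Longrightarrow> tree V E"
  by (simp add: is_tree_def tree_def tree_axioms_def connected_simple_graph_def)

lemma twice_sum_abs_diff:
  "2 * (\<Sum>j<n. \<bar>int i - int j\<bar>) =
     (if i < n then int i * (int i + 1) + (int n - 1 - int i) * (int n - int i)
      else 2 * int n * int i - int n * (int n - 1))"
  by (induction n) (auto simp: algebra_simps less_Suc_eq)

lemma adj_path_edges_iff: "adj (path_edges n) i j \<longleftrightarrow> (Suc i = j \<and> j < n) \<or> (Suc j = i \<and> i < n)"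
  unfolding adj_def path_edges_def by (auto simp: doubleton_eq_iff)

lemma path_edges_walk_span:
  "is_walk V (path_edges n) ps \<Longrightarrow> \<bar>int (hd ps) - int (last ps)\<bar> \<le> int (length ps) - 1"
proof (induction ps)
  case (Cons x ps)
  then show ?case by (cases "ps = []") (auto simp: is_walk_Cons adj_path_edges_iff)
qed (simp add: is_walk_def)

lemma is_walk_path_edges_upt: "i \<le> j \<Longrightarrow> j < n \<Longrightarrow> is_walk {0..<n} (path_edges n) [i..<Suc j]"
  unfolding is_walk_def by (auto simp: adj_path_edges_iff nth_upt simp del: upt_Suc)

lemma dist_path_edges:
  assumes "i < n" "j < n"
  shows "dist {0..<n} (path_edges n) i j = nat \<bar>int i - int j\<bar>"
proof (rule dist_eqI)
  have walk: "has_walk {0..<n} (path_edges n) (j - i) i j" if "i \<le> j" "j < n" for i j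
    unfolding has_walk_def using is_walk_path_edges_upt[OF that] that
    by (intro exI[of _ "[i..<Suc j]"]) (auto simp: hd_upt simp del: upt_Suc)
  show "has_walk {0..<n} (path_edges n) (nat \<bar>int i - int j\<bar>) i j"
  proof (cases "i \<le> j")
    case True
    then have "nat \<bar>int i - int j\<bar> = j - i" by arith
    then show ?thesis using walk[OF True assms(2)] by (simp only:)
  next
    case False
    then have "nat \<bar>int i - int j\<bar> = i - j" by arith
    then show ?thesis using has_walk_sym[OF walk[of j i]] False assms(1) by (simp only: not_le less_imp_le)
  qed
next
  fix m assume "has_walk {0..<n} (path_edges n) m i j"
  then show "nat \<bar>int i - int j\<bar> \<le> m"
    unfolding has_walk_def using path_edges_walk_span by force
qed

lemma twice_status_path_edges:
  assumes "i < n"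
  shows "2 * int (status {0..<n} (path_edges n) i) = int i * (int i + 1) + (int n - 1 - int i) * (int n - int i)"
proof -
  have "int (status {0..<n} (path_edges n) i) = (\<Sum>j\<in>{0..<n}. \<bar>int i - int j\<bar>)"
    unfolding status_def of_nat_sum using assms
    by (intro sum.cong) (auto simp: dist_path_edges simp del: atLeast0LessThan)
  then show ?thesis using twice_sum_abs_diff[of i n] assms by (simp add: atLeast0LessThan)
qed

lemma status_path_edges_eq_iff:
  assumes "i < n" "j < n"
  shows "status {0..<n} (path_edges n) i = status {0..<n} (path_edges n) j \<longleftrightarrow> i = j \<or> i + j + 1 = n"
proof -
  let ?s = "status {0..<n} (path_edges n)"
  have "2 * int (?s i) - 2 * int (?s j) = 2 * ((int i - int j) * (int i + int j + 1 - int n))"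
    unfolding twice_status_path_edges[OF assms(1)] twice_status_path_edges[OF assms(2)]
    by (simp add: algebra_simps)
  then have "?s i = ?s j \<longleftrightarrow> (int i - int j) * (int i + int j + 1 - int n) = 0"
    by auto
  also have "\<dots> \<longleftrightarrow> i = j \<or> i + j + 1 = n" by auto
  finally show ?thesis .
qed

lemma k_num_path_edges:
  assumes "1 \<le> n"
  shows "k_num {0..<n} (path_edges n) = (n + 1) div 2"
proof -
  let ?s = "status {0..<n} (path_edges n)" and ?H = "{0..<(n + 1) div 2}"
  have "?s ` {0..<n} \<subseteq> ?s ` ?H"
  proof
    fix z assume "z \<in> ?s ` {0..<n}"
    then obtain i where i: "i < n" "z = ?s i" by auto
    then have "z = ?s (min i (n - 1 - i))"
      using status_path_edges_eq_iff[of "n - 1 - i" n i] by (auto simp: min_def)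
    moreover have "min i (n - 1 - i) \<in> ?H"
      using i(1) by (simp only: atLeastLessThan_iff min_def) presburger
    ultimately show "z \<in> ?s ` ?H" by blast
  qed
  then have "?s ` {0..<n} = ?s ` ?H" by (auto intro!: image_mono)
  moreover have "inj_on ?s ?H"
    by (rule inj_onI) (auto simp: status_path_edges_eq_iff)
  ultimately show ?thesis unfolding k_num_def by (simp add: card_image)
qed

lemma diam_path_edges:
  assumes "1 \<le> n"
  shows "diam {0..<n} (path_edges n) = n - 1"
  using assms by (intro diam_eqI[where u = "n - 1" and v = 0]) (auto simp: dist_path_edges)

lemma adj_star_edges_iff: "adj (star_edges n) i j \<longleftrightarrow> (i = 0 \<and> 0 < j \<and> j < n) \<or> (j = 0 \<and> 0 < i \<and> i < n)"
  unfolding adj_def star_edges_def by (auto simp: doubleton_eq_iff)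

lemma dist_star_edges:
  assumes "i < n" "j < n"
  shows "dist {0..<n} (star_edges n) i j = (if i = j then 0 else if i = 0 \<or> j = 0 then 1 else 2)"
proof -
  consider "i = j" | "i \<noteq> j" "i = 0 \<or> j = 0" | "i \<noteq> j" "0 < i" "0 < j" by auto
  then show ?thesis
  proof cases
    case 1
    then show ?thesis using assms by (simp add: dist_self)
  next
    case 2
    then show ?thesis using assms by (auto simp: dist_adj_eq_1 adj_star_edges_iff)
  next
    case 3
    then show ?thesis
      using assms by (auto simp: dist_common_neighbour_eq_2[of _ i 0] adj_star_edges_iff)
  qed
qed

lemma status_star_edges:
  assumes "i < n"
  shows "status {0..<n} (star_edges n) i = (if i = 0 then n - 1 else 2 * n - 3)"
proof -
  let ?D = "dist {0..<n} (star_edges n)"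
  have status: "status {0..<n} (star_edges n) i = ?D i 0 + (\<Sum>j\<in>{Suc 0..<n}. ?D i j)"
    unfolding status_def using assms by (subst sum.atLeast_Suc_lessThan) auto
  show ?thesis
  proof (cases "i = 0")
    case True
    have "(\<Sum>j\<in>{Suc 0..<n}. ?D i j) = (\<Sum>j\<in>{Suc 0..<n}. 1)"
      using True by (intro sum.cong) (auto simp: dist_star_edges)
    then show ?thesis using status True assms by (simp add: dist_star_edges)
  next
    case False
    have "(\<Sum>j\<in>{Suc 0..<n}. ?D i j) = ?D i i + (\<Sum>j\<in>{Suc 0..<n} - {i}. ?D i j)"
      using False assms by (intro sum.remove) auto
    also have "\<dots> = (\<Sum>j\<in>{Suc 0..<n} - {i}. 2)"
      using False assms by (auto simp: dist_star_edges intro!: sum.cong)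
    also have "\<dots> = 2 * (n - 2)"
      using False assms by (simp add: card_Diff_singleton)
    finally show ?thesis using status False assms by (simp add: dist_star_edges)
  qed
qed

lemma k_num_star_edges:
  assumes "1 \<le> n"
  shows "k_num {0..<n} (star_edges n) = (if n \<le> 2 then 1 else 2)"
proof -
  let ?s = "status {0..<n} (star_edges n)"
  consider "n = 1" | "n = 2" | "3 \<le> n" using assms by linarith
  then show ?thesis
  proof cases
    case 1
    then show ?thesis by (simp add: k_num_def)
  next
    case 2
    then have "?s ` {0..<n} = {1}"
      by (auto simp: status_star_edges image_iff intro: bexI[of _ 0])
    then show ?thesis using 2 by (simp add: k_num_def)
  next
    case 3
    have "?s ` {0..<n} = {n - 1, 2 * n - 3}"
    proof
      show "?s ` {0..<n} \<subseteq> {n - 1, 2 * n - 3}" by (auto simp: status_star_edges)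
      have "?s 0 = n - 1" "?s 1 = 2 * n - 3" "0 \<in> {0..<n}" "1 \<in> {0..<n}"
        using 3 by (simp_all add: status_star_edges)
      then show "{n - 1, 2 * n - 3} \<subseteq> ?s ` {0..<n}" by (metis empty_subsetI image_eqI insert_subset)
    qed
    then show ?thesis using 3 by (simp add: k_num_def)
  qed
qed

lemma diam_star_edges:
  assumes "1 \<le> n"
  shows "diam {0..<n} (star_edges n) = min 2 (n - 1)"
proof -
  have bound: "dist {0..<n} (star_edges n) i j \<le> min 2 (n - 1)" if "i < n" "j < n" for i j
    using that by (auto simp: dist_star_edges)
  consider "n = 1" | "n = 2" | "3 \<le> n" using assms by linarith
  then show ?thesis
  proof cases
    case 1
    then show ?thesis using bound by (intro diam_eqI[where u = 0 and v = 0]) (auto simp: dist_star_edges)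
  next
    case 2
    then show ?thesis using bound by (intro diam_eqI[where u = 0 and v = 1]) (auto simp: dist_star_edges)
  next
    case 3
    then show ?thesis using bound by (intro diam_eqI[where u = 1 and v = 2]) (auto simp: dist_star_edges)
  qed
qed

lemma ceiling_half_Suc: "\<lceil>(real m + 1) / 2\<rceil> = int (m div 2 + 1)"
proof -
  obtain q where "m = 2 * q \<or> m = 2 * q + 1" by (metis odd_two_times_div_two_succ even_two_times_div_two)
  then show ?thesis by (auto simp: ceiling_eq_iff)
qed

theorem lemma3p2:
  shows "(\<forall>(V :: 'a set) E. is_tree V E \<longrightarrow>
            int (k_num V E) \<ge> \<lceil>(real (diam V E) + 1) / 2\<rceil>)
       \<and> (\<forall>n::nat. n \<ge> 1 \<longrightarrow>
            int (k_num {0..<n} (path_edges n)) = \<lceil>(real (diam {0..<n} (path_edges n)) + 1) / 2\<rceil>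
          \<and> int (k_num {0..<n} (star_edges n)) = \<lceil>(real (diam {0..<n} (star_edges n)) + 1) / 2\<rceil>)"
proof (intro conjI allI impI)
  fix V :: "'a set" and E
  assume "is_tree V E"
  then have "diam V E + 1 \<le> 2 * k_num V E" by (intro tree.diam_le_twice_k_num tree_if_is_tree)
  then show "int (k_num V E) \<ge> \<lceil>(real (diam V E) + 1) / 2\<rceil>"
    unfolding ceiling_half_Suc by linarith
next
  fix n :: nat
  assume "n \<ge> 1"
  then show "int (k_num {0..<n} (path_edges n)) = \<lceil>(real (diam {0..<n} (path_edges n)) + 1) / 2\<rceil>"
    and "int (k_num {0..<n} (star_edges n)) = \<lceil>(real (diam {0..<n} (star_edges n)) + 1) / 2\<rceil>"
    unfolding ceiling_half_Suc
    by (simp_all add: k_num_path_edges diam_path_edges k_num_star_edges diam_star_edges)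
qed

end
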